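(* Let $H$ be a regular tournament with $2m+1$ vertices and let $v\in V(H)$. Suppose there is no directed cycle with vertices $p,q,r,s$ in order ($p\to q\to r\to s\to p$) such that $p,r$ are out-neighbours of $v$ and $q,s$ are in-neighbours of $v$. Then $H$ is cyclic.
   Context: A tournament $H$ is regular if all its vertices have the same outdegree and all have the same indegree (so $|V(H)|=2m+1$ and every vertex has in- and outdegree $m$). A tournament $H$ is cyclic if it has an odd number $2m+1$ of vertices and they can be ordered $v_1,\dots,v_{2m+1}$ so that for $1\le i<j\le 2m+1$, $v_i$ is adjacent to $v_j$ (edge $v_i\to v_j$) if and only if $j-i\le m$. *)

theory Defs
  imports Main
begin

definition tournament :: "'a set \<Rightarrow> ('a \<Rightarrow> 'a \<Rightarrow> bool) \<Rightarrow> bool" where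
  "tournament V E \<longleftrightarrow> finite V
     \<and> (\<forall>u w. E u w \<longrightarrow> u \<in> V \<and> w \<in> V)
     \<and> (\<forall>u\<in>V. \<not> E u u)
     \<and> (\<forall>u\<in>V. \<forall>w\<in>V. u \<noteq> w \<longrightarrow> (E u w \<longleftrightarrow> \<not> E w u))"

definition out_nbrs :: "'a set \<Rightarrow> ('a \<Rightarrow> 'a \<Rightarrow> bool) \<Rightarrow> 'a \<Rightarrow> 'a set" where
  "out_nbrs V E v = {w \<in> V. E v w}"

definition in_nbrs :: "'a set \<Rightarrow> ('a \<Rightarrow> 'a \<Rightarrow> bool) \<Rightarrow> 'a \<Rightarrow> 'a set" where
  "in_nbrs V E v = {w \<in> V. E w v}"

definition regular_tournament :: "'a set \<Rightarrow> ('a \<Rightarrow> 'a \<Rightarrow> bool) \<Rightarrow> bool" where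
  "regular_tournament V E \<longleftrightarrow> tournament V E
     \<and> (\<forall>u\<in>V. \<forall>w\<in>V. card (out_nbrs V E u) = card (out_nbrs V E w)
                     \<and> card (in_nbrs V E u) = card (in_nbrs V E w))"

definition cyclic_tournament :: "'a set \<Rightarrow> ('a \<Rightarrow> 'a \<Rightarrow> bool) \<Rightarrow> bool" where
  "cyclic_tournament V E \<longleftrightarrow> (\<exists>m::nat. card V = 2*m+1 \<and>
     (\<exists>f::nat \<Rightarrow> 'a. bij_betw f {1..2*m+1} V \<and>
        (\<forall>i j. 1 \<le> i \<longrightarrow> i < j \<longrightarrow> j \<le> 2*m+1 \<longrightarrow> (E (f i) (f j) \<longleftrightarrow> j - i \<le> m))))"

end

theory Submission
  imports Defs
begin

text \<open>
  Let A and B be the out- and in-neighbourhoods of v; both have m elements. Forbidding the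
  alternating 4-cycles forces the sets N(a) of out-neighbours in B of the vertices a \<in> A to form
  a chain under inclusion. Let r(a) = |N(a)| and let c(b) count the in-neighbours in A of
  b \<in> B (score and in_score below). The score of a inside A is m - r(a), the score of b inside
  B is c(b) - 1, and by the chain property the c-values over B - N(a) add up to the sum of the
  positive differences r(a') - r(a). Landau's bounds for the subtournaments on A and on B
  therefore squeeze r into a bijection A \<rightarrow> {1..m}. Hence A is transitive, ordered by r;
  reversing all edges, B is transitive, ordered by decreasing c; and a \<rightarrow> b exactly when
  r(a) + c(b) > m. Listing v, then A by increasing r, then B by decreasing c, exhibits H as cyclic.
\<close>

definition tournament_on :: "'a set \<Rightarrow> ('a \<Rightarrow> 'a \<Rightarrow> bool) \<Rightarrow> bool" where
  "tournament_on W E \<longleftrightarrow> (\<forall>x\<in>W. \<not> E x x) \<and> (\<forall>x\<in>W. \<forall>y\<in>W. x \<noteq> y \<longrightarrow> (E x y \<longleftrightarrow> \<not> E y x))"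

lemma tournament_on_subset: "tournament_on W E \<Longrightarrow> X \<subseteq> W \<Longrightarrow> tournament_on X E"
  unfolding tournament_on_def by blast

lemma tournament_on_irrefl: "tournament_on W E \<Longrightarrow> x \<in> W \<Longrightarrow> \<not> E x x"
  unfolding tournament_on_def by blast

lemma tournament_on_asym: "tournament_on W E \<Longrightarrow> x \<in> W \<Longrightarrow> y \<in> W \<Longrightarrow> E x y \<Longrightarrow> \<not> E y x"
  unfolding tournament_on_def by metis

lemma tournament_on_total:
  "tournament_on W E \<Longrightarrow> x \<in> W \<Longrightarrow> y \<in> W \<Longrightarrow> x \<noteq> y \<Longrightarrow> E x y \<or> E y x"
  unfolding tournament_on_def by metis

lemma sum_out_degrees:
  assumes "tournament_on W E" "finite W"
  shows "2 * (\<Sum>x\<in>W. card (out_nbrs W E x)) = card W * (card W - 1)"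
proof -
  define P where "P = (SIGMA x:W. out_nbrs W E x)"
  define D where "D = (\<lambda>x. (x, x)) ` W"
  have WW: "W \<times> W = (P \<union> prod.swap ` P) \<union> D"
    using tournament_on_total[OF assms(1)] unfolding P_def D_def out_nbrs_def by fastforce
  have P_iff: "(x, y) \<in> P \<longleftrightarrow> x \<in> W \<and> y \<in> W \<and> E x y" for x y
    by (simp add: P_def out_nbrs_def)
  have "(y, x) \<notin> P" if "(x, y) \<in> P" for x y
    using that tournament_on_asym[OF assms(1)] by (simp add: P_iff)
  moreover have "(x, x) \<notin> P" for x
    using tournament_on_irrefl[OF assms(1)] by (simp add: P_iff)
  ultimately have disj: "P \<inter> prod.swap ` P = {}" "(P \<union> prod.swap ` P) \<inter> D = {}"
    unfolding D_def by auto
  have fin: "finite P" "finite (prod.swap ` P)" "finite D"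
    using assms(2) unfolding P_def D_def out_nbrs_def by auto
  have "card (W \<times> W) = card P + card (prod.swap ` P) + card D"
    unfolding WW using disj fin by (simp add: card_Un_disjoint)
  moreover have "card (prod.swap ` P) = card P"
    by (rule card_image) (simp add: swap_inj_on)
  moreover have "card D = card W"
    by (simp add: D_def card_image inj_on_def)
  ultimately have "card W * card W = 2 * card P + card W"
    by (simp add: card_cartesian_product)
  moreover have "card P = (\<Sum>x\<in>W. card (out_nbrs W E x))"
    using assms(2) by (simp add: P_def out_nbrs_def)
  ultimately show ?thesis by (simp add: diff_mult_distrib2)
qed

lemma sum_out_degrees_subset:
  assumes "tournament_on W E" "finite W" "Y \<subseteq> W"
  shows "2 * (\<Sum>y\<in>Y. card (out_nbrs W E y))
           = card Y * (card Y - 1) + 2 * (\<Sum>y\<in>Y. card (out_nbrs (W - Y) E y))"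
proof -
  have "card (out_nbrs W E y) = card (out_nbrs Y E y) + card (out_nbrs (W - Y) E y)" for y
  proof -
    have "out_nbrs W E y = out_nbrs Y E y \<union> out_nbrs (W - Y) E y"
      using assms(3) by (auto simp: out_nbrs_def)
    then show ?thesis
      using assms(2,3) by (simp add: card_Un_disjoint out_nbrs_def disjoint_iff finite_subset)
  qed
  then show ?thesis
    using sum_out_degrees[OF tournament_on_subset[OF assms(1,3)] finite_subset[OF assms(3,2)]]
    by (simp add: sum.distrib)
qed

lemma sum_out_degrees_le:
  assumes "tournament_on W E" "finite W" "Y \<subseteq> W"
  shows "2 * (\<Sum>y\<in>Y. card (out_nbrs W E y)) + card Y * (card Y + 1) \<le> 2 * card Y * card W"
proof -
  obtain k where k: "card W = card Y + k"
    using card_mono[OF assms(2,3)] le_Suc_ex by blast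
  have "(\<Sum>y\<in>Y. card (out_nbrs (W - Y) E y)) \<le> (\<Sum>y\<in>Y. card (W - Y))"
    using assms(2) by (intro sum_mono card_mono) (auto simp: out_nbrs_def)
  also have "\<dots> = card Y * k"
    using k assms(2,3) by (simp add: card_Diff_subset finite_subset)
  finally have "2 * (\<Sum>y\<in>Y. card (out_nbrs W E y)) \<le> card Y * (card Y - 1) + 2 * (card Y * k)"
    using sum_out_degrees_subset[OF assms] by simp
  moreover have "card Y * (card Y - 1) + 2 * (card Y * k) + card Y * (card Y + 1) = 2 * card Y * card W"
    unfolding k by (cases "card Y") (simp_all add: algebra_simps)
  ultimately show ?thesis by linarith
qed

lemma double_sum_lessThan: "2 * (\<Sum>i<d. i) = d * (d - 1)" for d :: nat
  by (induction d) (auto simp: algebra_simps)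

lemma transitive_if_scores:
  assumes "tournament_on W E" "finite W" "bij_betw \<psi> W {1..n}"
    and score: "\<And>w. w \<in> W \<Longrightarrow> card (out_nbrs W E w) = n - \<psi> w"
    and "w \<in> W" "w' \<in> W" "\<psi> w < \<psi> w'"
  shows "E w w'"
proof -
  define Y where "Y = {y \<in> W. \<psi> w < \<psi> y}"
  have Y_W: "Y \<subseteq> W" by (simp add: Y_def)
  have bij_Y: "bij_betw (\<lambda>y. n - \<psi> y) Y {..<n - \<psi> w}"
  proof -
    have "\<psi> ` Y = {j \<in> \<psi> ` W. \<psi> w < j}"
      by (auto simp: Y_def)
    also have "\<dots> = {\<psi> w<..n}"
      using assms(3) by (auto simp: bij_betw_def)
    finally have "\<psi> ` Y = {\<psi> w<..n}" .
    then have "bij_betw \<psi> Y {\<psi> w<..n}"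
      using assms(3) by (auto simp: bij_betw_def Y_def inj_on_subset)
    moreover have "bij_betw (\<lambda>j. n - j) {\<psi> w<..n} {..<n - \<psi> w}"
      by (rule bij_betw_byWitness[where f' = "\<lambda>i. n - i"]) auto
    ultimately show ?thesis using bij_betw_trans unfolding comp_def by blast
  qed
  have "(\<Sum>y\<in>Y. card (out_nbrs W E y)) = (\<Sum>y\<in>Y. n - \<psi> y)"
    using score Y_W by (intro sum.cong) auto
  also have "\<dots> = (\<Sum>i<n - \<psi> w. i)"
    using sum.reindex_bij_betw[OF bij_Y, of id] by simp
  finally have "2 * (\<Sum>y\<in>Y. card (out_nbrs W E y)) = 2 * (\<Sum>i<n - \<psi> w. i)"
    by simp
  also have "\<dots> = card Y * (card Y - 1)"
    using double_sum_lessThan bij_betw_same_card[OF bij_Y] by simp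
  finally have "(\<Sum>y\<in>Y. card (out_nbrs (W - Y) E y)) = 0"
    using sum_out_degrees_subset[OF assms(1,2) Y_W] by simp
  then have "out_nbrs (W - Y) E w' = {}"
    using assms(2,6,7) by (simp add: Y_def out_nbrs_def)
  then have "\<not> E w' w"
    using assms(5) unfolding Y_def out_nbrs_def by blast
  then show ?thesis
    using tournament_on_total[OF assms(1,5,6)] assms(7) by auto
qed

lemma consecutive_if_squeezed:
  fixes x m \<rho> S T :: nat
  assumes "x \<le> m" "\<rho> \<le> m" and total: "2 * (S + T + (m - x) * \<rho>) = m * (m + 1)"
    and lower: "x * (x + 1) \<le> 2 * S" and upper: "(m - \<rho>) * (m - \<rho> + 1) \<le> 2 * T"
  shows "\<rho> = x \<or> \<rho> = x + 1" and "2 * S = x * (x + 1)"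
proof -
  have "int (2 * (S + T + (m - x) * \<rho>)) = int (m * (m + 1))"
    using total by (simp only:)
  then have total': "2 * (int S + int T + (int m - int x) * int \<rho>) = int m * (int m + 1)"
    by (simp only: of_nat_mult of_nat_add of_nat_numeral of_nat_1 of_nat_diff[OF assms(1)])
  have "int (x * (x + 1)) \<le> int (2 * S)"
    using lower by (simp only: of_nat_le_iff)
  then have lower': "int x * (int x + 1) \<le> 2 * int S"
    by (simp only: of_nat_mult of_nat_add of_nat_numeral of_nat_1)
  have "int ((m - \<rho>) * (m - \<rho> + 1)) \<le> int (2 * T)"
    using upper by (simp only: of_nat_le_iff)
  then have upper': "(int m - int \<rho>) * (int m - int \<rho> + 1) \<le> 2 * int T"
    by (simp only: of_nat_mult of_nat_add of_nat_numeral of_nat_1 of_nat_diff[OF assms(2)])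
  \<comment> \<open>Adding the three bounds leaves (\<rho> - x)(\<rho> - x - 1) \<le> 0.\<close>
  have "int x * (int x + 1) + (int m - int \<rho>) * (int m - int \<rho> + 1)
          + 2 * ((int m - int x) * int \<rho>) - int m * (int m + 1)
        = (int \<rho> - int x) * (int \<rho> - int x - 1)"
    by (simp add: algebra_simps)
  moreover have "0 \<le> (int \<rho> - int x) * (int \<rho> - int x - 1)"
    by (cases "\<rho> \<le> x") (simp_all add: mult_nonpos_nonpos)
  ultimately have "(int \<rho> - int x) * (int \<rho> - int x - 1) = 0" "int x * (int x + 1) = 2 * int S"
    using total' lower' upper' by (smt (verit))+
  then have "\<rho> = x \<or> \<rho> = x + 1" "int (2 * S) = int (x * (x + 1))"
    by (auto simp only: mult_eq_0_iff of_nat_mult of_nat_add of_nat_numeral of_nat_1)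
  then show "\<rho> = x \<or> \<rho> = x + 1" "2 * S = x * (x + 1)"
    by (simp_all only: of_nat_eq_iff)
qed

locale staircase_bounds =
  fixes A :: "'a set" and r :: "'a \<Rightarrow> nat" and m :: nat
  assumes finite_A: "finite A" and card_A: "card A = m"
    and r_le: "\<And>a. a \<in> A \<Longrightarrow> r a \<le> m"
    and sum_total: "2 * sum r A = m * (m + 1)"
    and sum_lower: "\<And>X. X \<subseteq> A \<Longrightarrow> card X * (card X + 1) \<le> 2 * sum r X"
    and sum_upper: "\<And>a. a \<in> A \<Longrightarrow>
          (m - r a) * (m - r a + 1) \<le> 2 * (\<Sum>a'\<in>{a'\<in>A. r a < r a'}. r a' - r a)"
begin

lemma sum_at_most_level:
  assumes "a \<in> A"
  defines "X \<equiv> {a'\<in>A. r a' \<le> r a}"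
  shows "2 * sum r X = card X * (card X + 1)" and "r a = card X \<or> r a = card X + 1"
proof -
  define U where "U = {a'\<in>A. r a < r a'}"
  define x \<rho> S T where "x = card X" and "\<rho> = r a" and "S = sum r X"
    and "T = (\<Sum>a'\<in>U. r a' - \<rho>)"
  have split: "A = X \<union> U" "X \<inter> U = {}" "finite X" "finite U"
    using finite_A by (auto simp: X_def U_def)
  have x_le: "x \<le> m"
    unfolding x_def card_A[symmetric] using finite_A by (intro card_mono) (auto simp: X_def)
  have \<rho>_le: "\<rho> \<le> m"
    using r_le assms(1) by (simp add: \<rho>_def)
  have "sum r U = (\<Sum>a'\<in>U. (r a' - \<rho>) + \<rho>)"
    by (rule sum.cong) (auto simp: U_def \<rho>_def)
  moreover have "card X + card U = m"
    using split card_A by (simp add: card_Un_disjoint)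
  then have "card U = m - x"
    by (simp add: x_def)
  ultimately have "sum r U = T + (m - x) * \<rho>"
    by (simp add: sum.distrib T_def)
  then have total: "2 * (S + T + (m - x) * \<rho>) = m * (m + 1)"
    using sum_total split by (simp add: S_def sum.union_disjoint)
  have lower: "x * (x + 1) \<le> 2 * S"
    using sum_lower[of X] by (simp add: X_def x_def S_def)
  have upper: "(m - \<rho>) * (m - \<rho> + 1) \<le> 2 * T"
    using sum_upper[OF assms(1)] by (simp add: T_def U_def \<rho>_def)
  show "2 * sum r X = card X * (card X + 1)" "r a = card X \<or> r a = card X + 1"
    using consecutive_if_squeezed[OF x_le \<rho>_le total lower upper] by (simp_all add: S_def x_def \<rho>_def)
qed

lemma sum_less_level:
  assumes "a \<in> A"
  defines "Y \<equiv> {a'\<in>A. r a' < r a}"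
  shows "2 * sum r Y = card Y * (card Y + 1)"
proof (cases "Y = {}")
  case False
  have "finite Y" using finite_A by (simp add: Y_def)
  moreover have "Max (r ` Y) \<in> r ` Y"
    using False \<open>finite Y\<close> by (intro Max_in) auto
  then obtain a' where a': "a' \<in> Y" "r a' = Max (r ` Y)"
    by auto
  have "{a''\<in>A. r a'' \<le> r a'} = Y"
    using a' \<open>finite Y\<close> by (auto simp: Y_def)
  then show ?thesis
    using sum_at_most_level(1)[of a'] a'(1) by (simp add: Y_def)
qed simp

lemma bij_betw_interval: "bij_betw r A {1..m}"
proof -
  have fiber: "{a'\<in>A. r a' = r a} = {a}" and pos: "1 \<le> r a" if "a \<in> A" for a
  proof -
    define Y F where "Y = {a'\<in>A. r a' < r a}" and "F = {a'\<in>A. r a' = r a}"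
    define y t \<rho> where "y = card Y" and "t = card F" and "\<rho> = r a"
    have XYF: "{a'\<in>A. r a' \<le> r a} = Y \<union> F" "Y \<inter> F = {}" "finite Y" "finite F"
      using finite_A by (auto simp: Y_def F_def)
    have "a \<in> F" using that by (simp add: F_def)
    then have "1 \<le> t" using XYF by (auto simp: t_def Suc_le_eq card_gt_0_iff)
    have "sum r F = t * \<rho>" by (simp add: F_def t_def \<rho>_def)
    moreover have "2 * sum r Y = y * (y + 1)"
      using sum_less_level[OF that] by (simp add: Y_def y_def)
    moreover have "2 * sum r (Y \<union> F) = (y + t) * (y + t + 1)"
      using sum_at_most_level(1)[OF that] XYF by (simp add: card_Un_disjoint y_def t_def)
    ultimately have "(y + t) * (y + t + 1) = y * (y + 1) + 2 * (t * \<rho>)"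
      using XYF by (simp add: sum.union_disjoint)
    then have "t * (2 * \<rho>) = t * (2 * y + t + 1)"
      by (simp add: algebra_simps)
    then have "2 * \<rho> = 2 * y + t + 1"
      using \<open>1 \<le> t\<close> by (metis mult_left_cancel not_one_le_zero)
    moreover have "\<rho> = y + t \<or> \<rho> = y + t + 1"
      using sum_at_most_level(2)[OF that] XYF by (simp add: card_Un_disjoint y_def t_def \<rho>_def)
    ultimately have "t = 1" and "1 \<le> \<rho>" by auto
    then have "F = {a}"
      using \<open>a \<in> F\<close> unfolding t_def by (metis card_1_singletonE singletonD)
    then show "{a'\<in>A. r a' = r a} = {a}" "1 \<le> r a"
      using \<open>1 \<le> \<rho>\<close> by (simp_all add: F_def \<rho>_def)
  qed
  have "inj_on r A"
    by (rule inj_onI) (use fiber in blast)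
  moreover have "r ` A = {1..m}"
    using pos r_le card_A finite_A \<open>inj_on r A\<close>
    by (intro card_subset_eq) (auto simp: card_image)
  ultimately show ?thesis by (simp add: bij_betw_def)
qed

end

lemma out_nbrs_conversep [simp]: "out_nbrs W E\<inverse>\<inverse> u = in_nbrs W E u"
  by (simp add: out_nbrs_def in_nbrs_def)

lemma in_nbrs_conversep [simp]: "in_nbrs W E\<inverse>\<inverse> u = out_nbrs W E u"
  by (simp add: out_nbrs_def in_nbrs_def)

lemma tournament_iff_tournament_on:
  "tournament V E \<longleftrightarrow> finite V \<and> (\<forall>u w. E u w \<longrightarrow> u \<in> V \<and> w \<in> V) \<and> tournament_on V E"
  unfolding tournament_def tournament_on_def by blast

lemma tournament_on_conversep: "tournament_on W E \<Longrightarrow> tournament_on W E\<inverse>\<inverse>"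
  unfolding tournament_on_def conversep_iff by blast

lemma regular_tournament_conversep:
  assumes "regular_tournament V E"
  shows "regular_tournament V E\<inverse>\<inverse>"
proof -
  have "tournament V E\<inverse>\<inverse>"
    using assms tournament_on_conversep
    unfolding regular_tournament_def tournament_iff_tournament_on conversep_iff by blast
  moreover have "\<forall>u\<in>V. \<forall>w\<in>V. card (in_nbrs V E u) = card (in_nbrs V E w)
                               \<and> card (out_nbrs V E u) = card (out_nbrs V E w)"
    using assms unfolding regular_tournament_def by blast
  ultimately show ?thesis
    unfolding regular_tournament_def out_nbrs_conversep in_nbrs_conversep by blast
qed

lemma regular_out_degree:
  assumes "regular_tournament V E" "card V = 2 * m + 1" "u \<in> V"
  shows "card (out_nbrs V E u) = m"
proof -
  define d where "d = card (out_nbrs V E u)"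
  have T: "tournament_on V E" "finite V"
    using assms(1) unfolding regular_tournament_def tournament_iff_tournament_on by blast+
  have "card (out_nbrs V E w) = d" if "w \<in> V" for w
    using assms(1,3) that unfolding regular_tournament_def d_def by blast
  then have "(\<Sum>w\<in>V. card (out_nbrs V E w)) = card V * d"
    by (simp only: sum.cong[OF refl] sum_constant of_nat_id)
  then have "2 * ((2 * m + 1) * d) = (2 * m + 1) * (2 * m + 1 - 1)"
    using sum_out_degrees[OF T] by (simp only: assms(2))
  then have "(2 * m + 1) * (2 * d) = (2 * m + 1) * (2 * m)"
    by (simp add: algebra_simps)
  then have "d = m"
    using mult_left_cancel[of "2 * m + 1" "2 * d" "2 * m"] by simp
  then show ?thesis
    unfolding d_def .
qed

lemma card_filter_bij_betw:
  assumes "bij_betw r A K"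
  shows "card {a\<in>A. P (r a)} = card {k\<in>K. P k}"
proof -
  have "bij_betw r {a\<in>A. P (r a)} {k\<in>K. P k}"
    using assms by (auto simp: bij_betw_def inj_on_def)
  then show ?thesis by (rule bij_betw_same_card)
qed

lemma mem_upset_iff_card:
  assumes bij: "bij_betw r A {1..m}" and "U \<subseteq> A"
    and up: "\<And>a a'. a \<in> U \<Longrightarrow> a' \<in> A \<Longrightarrow> r a \<le> r a' \<Longrightarrow> a' \<in> U"
    and "a \<in> A"
  shows "a \<in> U \<longleftrightarrow> m + 1 \<le> r a + card U"
proof -
  have "finite A" using bij bij_betw_finite by blast
  then have "finite U" using \<open>U \<subseteq> A\<close> finite_subset by blast
  have "r a \<in> {1..m}" using bij \<open>a \<in> A\<close> by (auto simp: bij_betw_def)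
  show ?thesis
  proof
    assume "a \<in> U"
    then have "{a'\<in>A. r a \<le> r a'} \<subseteq> U" using up by blast
    then have "card {a'\<in>A. r a \<le> r a'} \<le> card U"
      using \<open>finite U\<close> by (rule card_mono[rotated])
    moreover have "{k\<in>{1..m}. r a \<le> k} = {r a..m}"
      using \<open>r a \<in> {1..m}\<close> by auto
    then have "card {a'\<in>A. r a \<le> r a'} = m + 1 - r a"
      using card_filter_bij_betw[OF bij, of "\<lambda>k. r a \<le> k"] by simp
    ultimately show "m + 1 \<le> r a + card U"
      using \<open>r a \<in> {1..m}\<close> by auto
  next
    assume le: "m + 1 \<le> r a + card U"
    show "a \<in> U"
    proof (rule ccontr)
      assume "a \<notin> U"
      have "U \<subseteq> {a'\<in>A. r a < r a'}"
      proof
        fix a' assume "a' \<in> U"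
        then have "\<not> r a' \<le> r a"
          using up \<open>a \<in> A\<close> \<open>a \<notin> U\<close> by blast
        then show "a' \<in> {a'\<in>A. r a < r a'}"
          using \<open>a' \<in> U\<close> \<open>U \<subseteq> A\<close> by auto
      qed
      then have "card U \<le> card {a'\<in>A. r a < r a'}"
        using \<open>finite A\<close> by (intro card_mono) auto
      moreover have "{k\<in>{1..m}. r a < k} = {r a<..m}"
        using \<open>r a \<in> {1..m}\<close> by auto
      then have "card {a'\<in>A. r a < r a'} = m - r a"
        using card_filter_bij_betw[OF bij, of "\<lambda>k. r a < k"] by simp
      ultimately show False
        using le \<open>r a \<in> {1..m}\<close> by auto
    qed
  qed
qed

lemma cyclic_tournamentI:
  assumes "card V = 2 * m + 1" and bij: "bij_betw \<psi> V {1..2 * m + 1}"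
    and edges: "\<And>x y. x \<in> V \<Longrightarrow> y \<in> V \<Longrightarrow> \<psi> x < \<psi> y \<Longrightarrow> E x y \<longleftrightarrow> \<psi> y - \<psi> x \<le> m"
  shows "cyclic_tournament V E"
proof -
  define f where "f = inv_into V \<psi>"
  have f_bij: "bij_betw f {1..2 * m + 1} V"
    unfolding f_def using bij by (rule bij_betw_inv_into)
  have \<psi>_f: "\<psi> (f i) = i" if "i \<in> {1..2 * m + 1}" for i
    unfolding f_def using bij that by (rule bij_betw_inv_into_right)
  have "E (f i) (f j) \<longleftrightarrow> j - i \<le> m" if "1 \<le> i" "i < j" "j \<le> 2 * m + 1" for i j
    using edges[of "f i" "f j"] f_bij \<psi>_f[of i] \<psi>_f[of j] that
    by (auto simp: bij_betw_def)
  then show ?thesis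
    unfolding cyclic_tournament_def using assms(1) f_bij by blast
qed

locale alternating_cycle_free =
  fixes V :: "'a set" and E :: "'a \<Rightarrow> 'a \<Rightarrow> bool" and v :: 'a and m :: nat
  assumes regular: "regular_tournament V E"
    and card_V: "card V = 2 * m + 1"
    and v_in_V: "v \<in> V"
    and no_alternating_cycle:
      "\<not> (\<exists>p q r s. distinct [p, q, r, s] \<and> E p q \<and> E q r \<and> E r s \<and> E s p
            \<and> p \<in> out_nbrs V E v \<and> r \<in> out_nbrs V E v
            \<and> q \<in> in_nbrs V E v \<and> s \<in> in_nbrs V E v)"
begin

abbreviation A :: "'a set" where "A \<equiv> out_nbrs V E v"
abbreviation B :: "'a set" where "B \<equiv> in_nbrs V E v"
abbreviation score :: "'a \<Rightarrow> nat" where "score a \<equiv> card (out_nbrs B E a)"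
abbreviation in_score :: "'a \<Rightarrow> nat" where "in_score b \<equiv> card (in_nbrs A E b)"

lemma converse: "alternating_cycle_free V E\<inverse>\<inverse> v m"
proof
  show "regular_tournament V E\<inverse>\<inverse>"
    using regular by (rule regular_tournament_conversep)
  show "\<not> (\<exists>p q r s. distinct [p, q, r, s] \<and> E\<inverse>\<inverse> p q \<and> E\<inverse>\<inverse> q r \<and> E\<inverse>\<inverse> r s \<and> E\<inverse>\<inverse> s p
          \<and> p \<in> out_nbrs V E\<inverse>\<inverse> v \<and> r \<in> out_nbrs V E\<inverse>\<inverse> v
          \<and> q \<in> in_nbrs V E\<inverse>\<inverse> v \<and> s \<in> in_nbrs V E\<inverse>\<inverse> v)"
  proof
    assume "\<exists>p q r s. distinct [p, q, r, s] \<and> E\<inverse>\<inverse> p q \<and> E\<inverse>\<inverse> q r \<and> E\<inverse>\<inverse> r s \<and> E\<inverse>\<inverse> s p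
          \<and> p \<in> out_nbrs V E\<inverse>\<inverse> v \<and> r \<in> out_nbrs V E\<inverse>\<inverse> v
          \<and> q \<in> in_nbrs V E\<inverse>\<inverse> v \<and> s \<in> in_nbrs V E\<inverse>\<inverse> v"
    then obtain p q r s where cycle: "distinct [p, q, r, s]" "E q p" "E p s" "E s r" "E r q"
      "q \<in> A" "s \<in> A" "p \<in> B" "r \<in> B"
      by auto
    moreover have "distinct [q, p, s, r]"
      using cycle(1) by auto
    ultimately show False
      using no_alternating_cycle by blast
  qed
qed (fact card_V v_in_V)+

lemma tournament_on_V: "tournament_on V E" and finite_V: "finite V"
  using regular unfolding regular_tournament_def tournament_iff_tournament_on by blast+

lemma out_degree: "u \<in> V \<Longrightarrow> card (out_nbrs V E u) = m"
  by (rule regular_out_degree[OF regular card_V])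

lemma A_subset_V: "A \<subseteq> V" and B_subset_V: "B \<subseteq> V"
  by (auto simp: out_nbrs_def in_nbrs_def)

lemma finite_A: "finite A" and finite_B: "finite B"
  using finite_V by (auto simp: out_nbrs_def in_nbrs_def)

lemma A_B_disjoint: "A \<inter> B = {}"
  using tournament_on_asym[OF tournament_on_V v_in_V] by (auto simp: out_nbrs_def in_nbrs_def)

lemma v_notin: "v \<notin> A" "v \<notin> B"
  using tournament_on_irrefl[OF tournament_on_V] by (auto simp: out_nbrs_def in_nbrs_def)

lemma V_cases: "u \<in> V \<Longrightarrow> u = v \<or> u \<in> A \<or> u \<in> B"
  using tournament_on_total[OF tournament_on_V _ v_in_V] by (auto simp: out_nbrs_def in_nbrs_def)

lemma card_A: "card A = m"
  by (rule out_degree[OF v_in_V])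

lemma card_B: "card B = m"
proof -
  have "insert v (A \<union> B) = V"
    using V_cases A_subset_V B_subset_V v_in_V by blast
  moreover have "card (insert v (A \<union> B)) = Suc (card A + card B)"
    using finite_A finite_B A_B_disjoint v_notin by (simp add: card_Un_disjoint)
  ultimately show ?thesis
    using card_V card_A by simp
qed

lemma out_degree_A: "a \<in> A \<Longrightarrow> card (out_nbrs A E a) + score a = m"
proof -
  assume "a \<in> A"
  then have "\<not> E a v"
    using tournament_on_asym[OF tournament_on_V v_in_V] by (simp add: out_nbrs_def)
  then have "out_nbrs V E a = out_nbrs A E a \<union> out_nbrs B E a"
    using V_cases A_subset_V B_subset_V unfolding out_nbrs_def[of _ E a] by blast
  then have "card (out_nbrs V E a) = card (out_nbrs A E a) + card (out_nbrs B E a)"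
    using finite_A finite_B A_B_disjoint
    by (simp add: card_Un_disjoint out_nbrs_def[of _ E a] disjoint_iff)
  then show ?thesis
    using out_degree A_subset_V \<open>a \<in> A\<close> by auto
qed

lemma out_nbrs_B_chain:
  assumes "a \<in> A" "a' \<in> A"
  shows "out_nbrs B E a \<subseteq> out_nbrs B E a' \<or> out_nbrs B E a' \<subseteq> out_nbrs B E a"
proof (rule ccontr)
  assume "\<not> ?thesis"
  then obtain b b' where b: "b \<in> B" "E a b" "\<not> E a' b" and b': "b' \<in> B" "E a' b'" "\<not> E a b'"
    by (auto simp: out_nbrs_def)
  have "E b a'" "E b' a"
    using tournament_on_total[OF tournament_on_V] A_subset_V B_subset_V A_B_disjoint assms b b'
    by blast+
  moreover have "distinct [a, b, a', b']"
    using A_B_disjoint assms b b' by auto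
  ultimately show False
    using no_alternating_cycle assms b b' by blast
qed

lemma out_nbrs_B_mono:
  assumes "a \<in> A" "a' \<in> A" "score a \<le> score a'"
  shows "out_nbrs B E a \<subseteq> out_nbrs B E a'"
proof -
  have "finite (out_nbrs B E a)"
    using finite_B by (simp add: out_nbrs_def)
  have "out_nbrs B E a' = out_nbrs B E a" if "out_nbrs B E a' \<subseteq> out_nbrs B E a"
    using card_subset_eq[OF \<open>finite _\<close> that] card_mono[OF \<open>finite _\<close> that] assms(3) by simp
  then show ?thesis
    using out_nbrs_B_chain[OF assms(1,2)] by blast
qed

lemma score_le: "score a \<le> m"
  using card_mono[OF finite_B, of "out_nbrs B E a"] card_B by (simp add: out_nbrs_def)

lemma sum_score: "2 * sum score A = m * (m + 1)"
proof -
  have "(\<Sum>a\<in>A. card (out_nbrs A E a)) + sum score A = m * m"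
    using out_degree_A card_A by (simp flip: sum.distrib)
  moreover have "2 * (\<Sum>a\<in>A. card (out_nbrs A E a)) = m * (m - 1)"
    using sum_out_degrees[OF tournament_on_subset[OF tournament_on_V A_subset_V] finite_A] card_A
    by simp
  moreover have "m * (m - 1) + m * (m + 1) = 2 * (m * m)"
    by (cases m) simp_all
  ultimately show ?thesis by linarith
qed

lemma sum_score_lower:
  assumes "X \<subseteq> A"
  shows "card X * (card X + 1) \<le> 2 * sum score X"
proof -
  have "(\<Sum>a\<in>X. card (out_nbrs A E a)) + sum score X = card X * m"
    using out_degree_A assms by (simp flip: sum.distrib add: subset_iff)
  moreover have "2 * (\<Sum>a\<in>X. card (out_nbrs A E a)) + card X * (card X + 1) \<le> 2 * card X * m"
    using sum_out_degrees_le[OF tournament_on_subset[OF tournament_on_V A_subset_V] finite_A assms]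
      card_A by simp
  ultimately show ?thesis by linarith
qed

lemma sum_in_score_outside:
  assumes "a \<in> A"
  shows "(\<Sum>b\<in>B - out_nbrs B E a. in_score b) = (\<Sum>a'\<in>{a'\<in>A. score a < score a'}. score a' - score a)"
proof -
  define Y where "Y = B - out_nbrs B E a"
  have "finite Y"
    using finite_B by (simp add: Y_def)
  have "(\<Sum>b\<in>Y. in_score b) = (\<Sum>b\<in>Y. \<Sum>a'\<in>{a'\<in>A. E a' b}. 1::nat)"
    by (simp only: in_nbrs_def[of A] card_eq_sum)
  also have "\<dots> = (\<Sum>a'\<in>A. \<Sum>b\<in>{b\<in>Y. E a' b}. 1::nat)"
    by (rule sum.swap_restrict[OF finite_A \<open>finite Y\<close>, symmetric])
  also have "\<dots> = (\<Sum>a'\<in>A. card (out_nbrs B E a' - out_nbrs B E a))"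
  proof -
    have "{b\<in>Y. E a' b} = out_nbrs B E a' - out_nbrs B E a" for a'
      by (auto simp: Y_def out_nbrs_def[of B])
    then show ?thesis by simp
  qed
  also have "\<dots> = (\<Sum>a'\<in>{a'\<in>A. score a < score a'}. score a' - score a)"
  proof -
    have "card (out_nbrs B E a' - out_nbrs B E a) = (if score a < score a' then score a' - score a else 0)"
      if "a' \<in> A" for a'
    proof (cases "score a < score a'")
      case True
      then have "out_nbrs B E a \<subseteq> out_nbrs B E a'"
        using out_nbrs_B_mono[OF assms that] by simp
      then show ?thesis
        using True finite_B by (simp add: card_Diff_subset out_nbrs_def)
    next
      case False
      then have "out_nbrs B E a' - out_nbrs B E a = {}"
        using out_nbrs_B_mono[OF that assms] by simp
      then show ?thesis
        using False by (metis card.empty)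
    qed
    then show ?thesis
      by (simp add: sum.inter_filter[OF finite_A] cong: sum.cong)
  qed
  finally show ?thesis
    unfolding Y_def .
qed

lemma sum_score_upper:
  assumes "a \<in> A"
  shows "(m - score a) * (m - score a + 1) \<le> 2 * (\<Sum>a'\<in>{a'\<in>A. score a < score a'}. score a' - score a)"
proof -
  interpret rev: alternating_cycle_free V "E\<inverse>\<inverse>" v m
    by (rule converse)
  have "card (B - out_nbrs B E a) = m - score a"
    using finite_B card_B by (simp add: card_Diff_subset out_nbrs_def)
  \<comment> \<open>Landau's bound for the tournament on B, obtained by reversing all edges\<close>
  moreover have "card (B - out_nbrs B E a) * (card (B - out_nbrs B E a) + 1)
      \<le> 2 * (\<Sum>b\<in>B - out_nbrs B E a. in_score b)"
    using rev.sum_score_lower[of "B - out_nbrs B E a"] by simp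
  ultimately show ?thesis
    using sum_in_score_outside[OF assms] by simp
qed

lemma score_bij: "bij_betw score A {1..m}"
proof -
  interpret staircase_bounds A score m
    by unfold_locales
      (use finite_A card_A score_le sum_score sum_score_lower sum_score_upper in auto)
  show ?thesis by (rule bij_betw_interval)
qed

lemma edge_if_score_less:
  assumes "a \<in> A" "a' \<in> A" "score a < score a'"
  shows "E a a'"
proof (rule transitive_if_scores[OF tournament_on_subset[OF tournament_on_V A_subset_V]
      finite_A score_bij _ assms])
  show "card (out_nbrs A E w) = m - score w" if "w \<in> A" for w
    using out_degree_A[OF that] by arith
qed

lemma edge_iff_score_add_in_score:
  assumes "a \<in> A" "b \<in> B"
  shows "E a b \<longleftrightarrow> m + 1 \<le> score a + in_score b"
proof -
  define U where "U = in_nbrs A E b"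
  have U_iff: "a' \<in> U \<longleftrightarrow> a' \<in> A \<and> E a' b" for a'
    by (simp add: U_def in_nbrs_def[of A])
  have "U \<subseteq> A" using U_iff by blast
  moreover have "a' \<in> U" if "a'' \<in> U" "a' \<in> A" "score a'' \<le> score a'" for a' a''
  proof -
    have "b \<in> out_nbrs B E a''"
      using that(1) assms(2) U_iff by (simp add: out_nbrs_def[of B])
    then have "b \<in> out_nbrs B E a'"
      using out_nbrs_B_mono[of a'' a'] that U_iff by blast
    then show ?thesis
      using that(2) U_iff by (simp add: out_nbrs_def[of B])
  qed
  ultimately show ?thesis
    using mem_upset_iff_card[OF score_bij, of U a] assms(1) U_iff by (simp add: U_def)
qed

lemma in_score_bij: "bij_betw in_score B {1..m}"
proof -
  interpret rev: alternating_cycle_free V "E\<inverse>\<inverse>" v m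
    by (rule converse)
  show ?thesis
    using rev.score_bij by simp
qed

lemma edge_if_in_score_less: "b \<in> B \<Longrightarrow> b' \<in> B \<Longrightarrow> in_score b < in_score b' \<Longrightarrow> E b' b"
proof -
  interpret rev: alternating_cycle_free V "E\<inverse>\<inverse>" v m
    by (rule converse)
  show "b \<in> B \<Longrightarrow> b' \<in> B \<Longrightarrow> in_score b < in_score b' \<Longrightarrow> E b' b"
    using rev.edge_if_score_less[of b b'] by simp
qed

definition rank :: "'a \<Rightarrow> nat" where
  "rank u = (if u = v then 1 else if u \<in> A then score u + 1 else 2 * m + 2 - in_score u)"

lemma score_range: "a \<in> A \<Longrightarrow> 1 \<le> score a \<and> score a \<le> m"
  using bij_betw_apply[OF score_bij] by simp

lemma in_score_range: "b \<in> B \<Longrightarrow> 1 \<le> in_score b \<and> in_score b \<le> m"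
  using bij_betw_apply[OF in_score_bij] by simp

lemma rank_v: "rank v = 1"
  by (simp add: rank_def)

lemma rank_A: "a \<in> A \<Longrightarrow> rank a = score a + 1"
  using v_notin by (auto simp: rank_def)

lemma rank_B: "b \<in> B \<Longrightarrow> rank b = 2 * m + 2 - in_score b"
  using v_notin A_B_disjoint by (auto simp: rank_def)

lemma rank_bij: "bij_betw rank V {1..2 * m + 1}"
proof -
  have "bij_betw rank {v} {1}"
    by (simp add: rank_v)
  moreover have "bij_betw rank A {2..m + 1}"
  proof -
    have "bij_betw ((\<lambda>k. k + 1) \<circ> score) A {2..m + 1}"
      using score_bij
      by (rule bij_betw_trans) (rule bij_betw_byWitness[where f' = "\<lambda>k. k - 1"]; auto)
    then show ?thesis
      by (rule bij_betw_cong[THEN iffD1, rotated]) (simp add: rank_A)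
  qed
  moreover have "bij_betw rank B {m + 2..2 * m + 1}"
  proof -
    have "bij_betw ((\<lambda>k. 2 * m + 2 - k) \<circ> in_score) B {m + 2..2 * m + 1}"
      using in_score_bij
      by (rule bij_betw_trans) (rule bij_betw_byWitness[where f' = "\<lambda>k. 2 * m + 2 - k"]; auto)
    then show ?thesis
      by (rule bij_betw_cong[THEN iffD1, rotated]) (simp add: rank_B)
  qed
  ultimately have "bij_betw rank ({v} \<union> (A \<union> B)) ({1} \<union> ({2..m + 1} \<union> {m + 2..2 * m + 1}))"
    by (intro bij_betw_combine) auto
  moreover have "{v} \<union> (A \<union> B) = V"
    using V_cases A_subset_V B_subset_V v_in_V by blast
  moreover have "{1} \<union> ({2..m + 1} \<union> {m + 2..2 * m + 1}) = {1..2 * m + 1}"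
    by auto
  ultimately show ?thesis
    by metis
qed

lemma rank_edge_iff:
  assumes "x \<in> V" "y \<in> V" "rank x < rank y"
  shows "E x y \<longleftrightarrow> rank y - rank x \<le> m"
proof -
  consider "x = v" | "x \<in> A" | "x \<in> B"
    using V_cases[OF assms(1)] by blast
  then show ?thesis
  proof cases
    case 1
    consider "y \<in> A" | "y \<in> B"
      using V_cases[OF assms(2)] assms(3) 1 by auto
    then show ?thesis
    proof cases
      case 1
      then show ?thesis
        using \<open>x = v\<close> rank_v rank_A score_range by (simp add: out_nbrs_def[of V E v])
    next
      case 2
      then have "\<not> E v y"
        using tournament_on_asym[OF tournament_on_V] v_in_V by (simp add: in_nbrs_def[of V E v])
      then show ?thesis
        using \<open>x = v\<close> rank_v rank_B[OF 2] in_score_range[OF 2] by simp arith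
    qed
  next
    case 2
    consider "y \<in> A" | "y \<in> B"
      using V_cases[OF assms(2)] assms(3) 2 rank_v rank_A by force
    then show ?thesis
    proof cases
      case 1
      then show ?thesis
        using 2 assms(3) edge_if_score_less rank_A score_range by force
    next
      case 2
      then show ?thesis
        using \<open>x \<in> A\<close> edge_iff_score_add_in_score rank_A rank_B score_range in_score_range by force
    qed
  next
    case 3
    have "m + 2 \<le> rank x"
      using rank_B[OF 3] in_score_range[OF 3] by arith
    then have "y \<in> B"
      using V_cases[OF assms(2)] assms(3) rank_v rank_A score_range by fastforce
    have "in_score y < in_score x" "rank y - rank x \<le> m"
      using assms(3) rank_B[OF 3] rank_B[OF \<open>y \<in> B\<close>] in_score_range[OF 3]
        in_score_range[OF \<open>y \<in> B\<close>] by arith+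
    then show ?thesis
      using edge_if_in_score_less[OF \<open>y \<in> B\<close> 3] by simp
  qed
qed

lemma cyclic: "cyclic_tournament V E"
  using card_V rank_bij rank_edge_iff by (rule cyclic_tournamentI)

end

theorem theorem3p8:
  fixes V :: "'a set" and E :: "'a \<Rightarrow> 'a \<Rightarrow> bool" and v :: 'a and m :: nat
  assumes "regular_tournament V E"
    and "card V = 2*m+1"
    and "v \<in> V"
    and "\<not> (\<exists>p q r s. distinct [p, q, r, s] \<and> E p q \<and> E q r \<and> E r s \<and> E s p
              \<and> p \<in> out_nbrs V E v \<and> r \<in> out_nbrs V E v
              \<and> q \<in> in_nbrs V E v \<and> s \<in> in_nbrs V E v)"
  shows "cyclic_tournament V E"
  using alternating_cycle_free.intro[OF assms] by (rule alternating_cycle_free.cyclic)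

end
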